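(* Let $M$ be a connected matroid, let $N$ be a minor of $M$ with no loops and no coloops, and let $(A,B)$ be a $2$-separation of $M$ with $B\cap E(N)=\{f\}$. If $f$ is not in series or in parallel with any other element of $M$, then there exists an element $e\in B\setminus\{f\}$ such that both $M\setminus e$ and $M/e$ have $N$ as a minor.
   Context: $\lambda_M(X) = \rank_M(X) + \rank_M(E(M)\setminus X) - \rank(M)$. A $2$-separation of $M$ is a partition $(A,B)$ of $E(M)$ with $|A|,|B|\geq 2$ and $\lambda_M(A)<2$. "$M'$ has $N$ as a minor" means $N$ itself (with labelled ground set) equals $M'/C\setminus D$ for some disjoint $C,D\subseteq E(M')$. *)

theory Defs
  imports Main
begin

text \<open>The predicate is required to vanish outside subsets of the ground set, so
  that equality of matroids (as records) is the usual equality of labelled matroids.\<close>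

record 'a matroid =
  ground :: "'a set"
  indep  :: "'a set \<Rightarrow> bool"

definition matroid :: "'a matroid \<Rightarrow> bool" where
  "matroid M \<longleftrightarrow>
     finite (ground M) \<and>
     (\<forall>I. indep M I \<longrightarrow> I \<subseteq> ground M) \<and>
     indep M {} \<and>
     (\<forall>I J. indep M J \<and> I \<subseteq> J \<longrightarrow> indep M I) \<and>
     (\<forall>I J. indep M I \<and> indep M J \<and> card I < card J \<longrightarrow>
        (\<exists>x \<in> J - I. indep M (insert x I)))"

definition rank :: "'a matroid \<Rightarrow> 'a set \<Rightarrow> nat" where
  "rank M X = Max {card I | I. I \<subseteq> X \<and> indep M I}"

definition basis :: "'a matroid \<Rightarrow> 'a set \<Rightarrow> bool" where
  "basis M B \<longleftrightarrow> indep M B \<and> (\<forall>J. indep M J \<and> B \<subseteq> J \<longrightarrow> J = B)"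

definition circuit :: "'a matroid \<Rightarrow> 'a set \<Rightarrow> bool" where
  "circuit M C \<longleftrightarrow> C \<subseteq> ground M \<and> \<not> indep M C \<and> (\<forall>x \<in> C. indep M (C - {x}))"

definition dual :: "'a matroid \<Rightarrow> 'a matroid" where
  "dual M = \<lparr>ground = ground M,
             indep = (\<lambda>I. I \<subseteq> ground M \<and> (\<exists>B. basis M B \<and> I \<inter> B = {}))\<rparr>"

definition cocircuit :: "'a matroid \<Rightarrow> 'a set \<Rightarrow> bool" where
  "cocircuit M C \<longleftrightarrow> circuit (dual M) C"

definition loop :: "'a matroid \<Rightarrow> 'a \<Rightarrow> bool" where
  "loop M e \<longleftrightarrow> circuit M {e}"

definition coloop :: "'a matroid \<Rightarrow> 'a \<Rightarrow> bool" where
  "coloop M e \<longleftrightarrow> cocircuit M {e}"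

definition in_parallel :: "'a matroid \<Rightarrow> 'a \<Rightarrow> 'a \<Rightarrow> bool" where
  "in_parallel M e f \<longleftrightarrow> e \<noteq> f \<and> circuit M {e, f}"

definition in_series :: "'a matroid \<Rightarrow> 'a \<Rightarrow> 'a \<Rightarrow> bool" where
  "in_series M e f \<longleftrightarrow> e \<noteq> f \<and> cocircuit M {e, f}"

definition connected :: "'a matroid \<Rightarrow> bool" where
  "connected M \<longleftrightarrow>
     (\<forall>e \<in> ground M. \<forall>f \<in> ground M. e \<noteq> f \<longrightarrow> (\<exists>C. circuit M C \<and> e \<in> C \<and> f \<in> C))"

definition deletion :: "'a matroid \<Rightarrow> 'a set \<Rightarrow> 'a matroid" where
  "deletion M D = \<lparr>ground = ground M - D,
                   indep = (\<lambda>I. indep M I \<and> I \<subseteq> ground M - D)\<rparr>"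

definition contraction :: "'a matroid \<Rightarrow> 'a set \<Rightarrow> 'a matroid" where
  "contraction M C = \<lparr>ground = ground M - C,
                      indep = (\<lambda>I. I \<subseteq> ground M - C \<and>
                                   rank M (I \<union> C) = card I + rank M C)\<rparr>"

definition is_minor :: "'a matroid \<Rightarrow> 'a matroid \<Rightarrow> bool" where
  "is_minor N M \<longleftrightarrow>
     (\<exists>C D. C \<subseteq> ground M \<and> D \<subseteq> ground M \<and> C \<inter> D = {} \<and>
            N = deletion (contraction M C) D)"

definition conn_fn :: "'a matroid \<Rightarrow> 'a set \<Rightarrow> int" where
  "conn_fn M X = int (rank M X) + int (rank M (ground M - X)) - int (rank M (ground M))"

definition two_separation :: "'a matroid \<Rightarrow> 'a set \<Rightarrow> 'a set \<Rightarrow> bool" where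
  "two_separation M A B \<longleftrightarrow>
     A \<inter> B = {} \<and> A \<union> B = ground M \<and> card A \<ge> 2 \<and> card B \<ge> 2 \<and> conn_fn M A < 2"

end

theory Submission
  imports Defs
begin

text \<open>Write \<open>N = M / C \ D\<close> and collapse the side \<open>A\<close> of the 2-separation to a single
  element \<open>p\<close>: on \<open>B \<union> {p}\<close>, the function sending \<open>Z \<subseteq> B\<close> to \<open>r(Z)\<close> and \<open>Z \<union> {p}\<close> to
  \<open>r(A \<union> Z) - r(A) + 1\<close> is a matroid rank function because \<open>\<lambda>(A) \<le> 1\<close>. Call \<open>S \<subseteq> B - f\<close>
  a parallel set if \<open>f\<close> and \<open>p\<close> are parallel non-loops after contracting \<open>S\<close> in it. For every
  parallel set \<open>S\<close>, contracting \<open>(C \<inter> A) \<union> S\<close> and deleting \<open>(D \<inter> A) \<union> (B - f - S)\<close> gives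
  the same minor \<open>N\<close>, and \<open>C \<inter> B\<close> is a parallel set because \<open>f\<close> is neither a loop nor a
  coloop of \<open>N\<close>.

  If the parallel set were unique, \<open>f\<close> would have a series or parallel partner. This is
  proved for arbitrary rank functions by induction on the ground set: deleting an element
  outside \<open>S \<union> {f, p}\<close> or contracting an element of \<open>S\<close> keeps the parallel set unique, so the
  partners found there yield, if \<open>f\<close> has none itself, a triad through \<open>f\<close> for every such
  deletion and a triangle through \<open>f\<close> for every such contraction; orthogonality of triads and
  triangles then forces \<open>|S| \<le> 2\<close>, and for \<open>|S| = 1\<close> and \<open>|S| = 2\<close> a second parallel
  set can be read off directly.
  So there are two parallel sets, and every element of their symmetric difference can be both
  deleted and contracted.\<close>

section \<open>Rank in matroids\<close>

lemma matroid_finite_ground: "matroid M \<Longrightarrow> finite (ground M)"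
  by (simp add: matroid_def)

lemma matroid_indep_subset_ground: "matroid M \<Longrightarrow> indep M I \<Longrightarrow> I \<subseteq> ground M"
  by (simp add: matroid_def)

lemma matroid_indep_empty: "matroid M \<Longrightarrow> indep M {}"
  by (simp add: matroid_def)

lemma matroid_indep_subset: "matroid M \<Longrightarrow> indep M J \<Longrightarrow> I \<subseteq> J \<Longrightarrow> indep M I"
  unfolding matroid_def by blast

lemma matroid_augment:
  "matroid M \<Longrightarrow> indep M I \<Longrightarrow> indep M J \<Longrightarrow> card I < card J \<Longrightarrow> \<exists>x\<in>J - I. indep M (insert x I)"
  unfolding matroid_def by blast

lemma matroid_indep_finite: "matroid M \<Longrightarrow> indep M I \<Longrightarrow> finite I"
  using matroid_indep_subset_ground matroid_finite_ground finite_subset by blast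

lemma finite_indep_cards:
  assumes "matroid M"
  shows "finite {card I | I. I \<subseteq> X \<and> indep M I}"
proof -
  have "{card I | I. I \<subseteq> X \<and> indep M I} \<subseteq> card ` Pow (ground M)"
    using matroid_indep_subset_ground[OF assms] by blast
  thus ?thesis using matroid_finite_ground[OF assms] finite_subset by blast
qed

lemma card_indep_le_rank:
  assumes "matroid M" "I \<subseteq> X" "indep M I"
  shows "card I \<le> rank M X"
  unfolding rank_def using finite_indep_cards[OF assms(1)] assms(2,3)
  by (intro Max_ge) auto

lemma rank_attained:
  assumes "matroid M"
  obtains I where "I \<subseteq> X" "indep M I" "card I = rank M X"
proof -
  have "card {} \<in> {card I | I. I \<subseteq> X \<and> indep M I}"
    using matroid_indep_empty[OF assms] by (auto intro!: exI[of _ "{}"])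
  hence "rank M X \<in> {card I | I. I \<subseteq> X \<and> indep M I}"
    unfolding rank_def by (intro Max_in[OF finite_indep_cards[OF assms]]) auto
  thus thesis using that by auto
qed

lemma rank_mono:
  assumes "matroid M" "X \<subseteq> Y"
  shows "rank M X \<le> rank M Y"
proof -
  obtain I where "I \<subseteq> X" "indep M I" "card I = rank M X" using rank_attained[OF assms(1)] .
  thus ?thesis using card_indep_le_rank[OF assms(1), of I Y] assms(2) by simp
qed

lemma rank_le_card:
  assumes "matroid M" "finite X"
  shows "rank M X \<le> card X"
proof -
  obtain I where "I \<subseteq> X" "indep M I" "card I = rank M X" using rank_attained[OF assms(1)] .
  thus ?thesis using card_mono[OF assms(2)] by metis
qed

lemma rank_empty: "matroid M \<Longrightarrow> rank M {} = 0"
  using rank_le_card[of M "{}"] by simp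

lemma indep_iff_rank:
  assumes "matroid M" "finite I"
  shows "indep M I \<longleftrightarrow> rank M I = card I"
proof
  assume "indep M I"
  thus "rank M I = card I"
    using card_indep_le_rank[OF assms(1) order.refl] rank_le_card[OF assms] by (simp add: le_antisym)
next
  assume r: "rank M I = card I"
  obtain J where "J \<subseteq> I" "indep M J" "card J = rank M I" using rank_attained[OF assms(1)] .
  with r assms(2) show "indep M I" by (metis card_subset_eq)
qed

lemma rank_indep: "matroid M \<Longrightarrow> indep M I \<Longrightarrow> rank M I = card I"
  using indep_iff_rank matroid_indep_finite by blast

lemma indep_extend_to_rank:
  assumes "matroid M" "indep M I" "I \<subseteq> X"
  shows "\<exists>J. I \<subseteq> J \<and> J \<subseteq> X \<and> indep M J \<and> card J = rank M X"
  using assms(2,3)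
proof (induction "rank M X - card I" arbitrary: I rule: less_induct)
  case less
  show ?case
  proof (cases "card I < rank M X")
    case True
    obtain J0 where J0: "J0 \<subseteq> X" "indep M J0" "card J0 = rank M X"
      using rank_attained[OF assms(1)] .
    obtain x where x: "x \<in> J0 - I" "indep M (insert x I)"
      using matroid_augment[OF assms(1) less.prems(1) J0(2)] True J0(3) by auto
    have "card (insert x I) = card I + 1"
      using x matroid_indep_finite[OF assms(1) less.prems(1)] by simp
    hence "rank M X - card (insert x I) < rank M X - card I" using True by simp
    moreover have "insert x I \<subseteq> X" using x(1) J0(1) less.prems(2) by blast
    ultimately obtain J where "insert x I \<subseteq> J" "J \<subseteq> X" "indep M J" "card J = rank M X"
      using less.hyps[OF _ x(2)] by blast
    thus ?thesis by blast
  next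
    case False
    then have "card I = rank M X" using card_indep_le_rank[OF assms(1) less.prems(2,1)] by simp
    thus ?thesis using less.prems by blast
  qed
qed

lemma rank_insert_le:
  assumes "matroid M"
  shows "rank M (insert x X) \<le> rank M X + 1"
proof -
  obtain J where J: "J \<subseteq> insert x X" "indep M J" "card J = rank M (insert x X)"
    using rank_attained[OF assms] .
  have "indep M (J - {x})" using matroid_indep_subset[OF assms J(2)] by blast
  hence "card (J - {x}) \<le> rank M X" using J(1) card_indep_le_rank[OF assms] by blast
  moreover have "card J \<le> card (J - {x}) + 1"
    using matroid_indep_finite[OF assms J(2)] by (cases "x \<in> J") (simp_all add: card_Diff_singleton)
  ultimately show ?thesis using J(3) by simp
qed

lemma rank_submodular:
  assumes "matroid M"
  shows "rank M (X \<union> Y) + rank M (X \<inter> Y) \<le> rank M X + rank M Y"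
proof -
  obtain I where I: "I \<subseteq> X \<inter> Y" "indep M I" "card I = rank M (X \<inter> Y)"
    using rank_attained[OF assms] .
  obtain J where J: "I \<subseteq> J" "J \<subseteq> X \<union> Y" "indep M J" "card J = rank M (X \<union> Y)"
    using indep_extend_to_rank[OF assms I(2), of "X \<union> Y"] I(1) by auto
  have fJ: "finite J" using matroid_indep_finite[OF assms J(3)] .
  have "indep M (J \<inter> X)" "indep M (J \<inter> Y)"
    by (rule matroid_indep_subset[OF assms J(3)], blast)+
  hence "card (J \<inter> X) \<le> rank M X" "card (J \<inter> Y) \<le> rank M Y"
    using card_indep_le_rank[OF assms] by blast+
  moreover have "card (J \<inter> X) + card (J \<inter> Y) = card (J \<inter> X \<union> J \<inter> Y) + card (J \<inter> X \<inter> (J \<inter> Y))"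
    using card_Un_Int[of "J \<inter> X" "J \<inter> Y"] fJ by simp
  moreover have "J \<inter> X \<union> J \<inter> Y = J" using J(2) by blast
  moreover have "card I \<le> card (J \<inter> X \<inter> (J \<inter> Y))" using I(1) J(1) fJ by (intro card_mono) auto
  ultimately show ?thesis using I(3) J(4) by simp
qed

lemma rank_insert_eq_mono:
  assumes "matroid M" "X \<subseteq> Y" "rank M (insert x X) = rank M X"
  shows "rank M (insert x Y) = rank M Y"
proof -
  have "rank M (insert x X \<union> Y) + rank M (insert x X \<inter> Y) \<le> rank M (insert x X) + rank M Y"
    using rank_submodular[OF assms(1)] .
  moreover have "insert x X \<union> Y = insert x Y" using assms(2) by blast
  moreover have "rank M X \<le> rank M (insert x X \<inter> Y)" using assms(2) by (intro rank_mono[OF assms(1)]) blast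
  moreover have "rank M Y \<le> rank M (insert x Y)" by (intro rank_mono[OF assms(1)]) blast
  ultimately show ?thesis using assms(3) by simp
qed

lemma basis_card:
  assumes "matroid M" "basis M B"
  shows "card B = rank M (ground M)"
proof (rule ccontr)
  have iB: "indep M B" using assms(2) basis_def by blast
  assume "card B \<noteq> rank M (ground M)"
  hence "card B < rank M (ground M)"
    using card_indep_le_rank[OF assms(1) matroid_indep_subset_ground[OF assms(1) iB] iB] by simp
  moreover obtain J where "J \<subseteq> ground M" "indep M J" "card J = rank M (ground M)"
    using rank_attained[OF assms(1)] .
  ultimately have "\<exists>x\<in>J - B. indep M (insert x B)"
    using matroid_augment[OF assms(1) iB] by simp
  thus False using assms(2) unfolding basis_def by blast
qed

lemma basis_of_card:
  assumes "matroid M" "indep M B" "card B = rank M (ground M)"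
  shows "basis M B"
  unfolding basis_def
proof (intro conjI allI impI assms(2))
  fix J assume J: "indep M J \<and> B \<subseteq> J"
  have "card J \<le> rank M (ground M)"
    using card_indep_le_rank[OF assms(1) matroid_indep_subset_ground[OF assms(1)]] J by blast
  thus "J = B" using J assms(3) matroid_indep_finite[OF assms(1)] by (metis card_seteq)
qed

lemma dual_indep_iff:
  assumes "matroid M" "I \<subseteq> ground M"
  shows "indep (dual M) I \<longleftrightarrow> rank M (ground M - I) = rank M (ground M)"
proof
  assume "indep (dual M) I"
  then obtain B where B: "basis M B" "I \<inter> B = {}" unfolding dual_def by auto
  have iB: "indep M B" using B(1) basis_def by blast
  have "B \<subseteq> ground M - I" using matroid_indep_subset_ground[OF assms(1) iB] B(2) by blast
  hence "card B \<le> rank M (ground M - I)" using card_indep_le_rank[OF assms(1) _ iB] by blast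
  moreover have "rank M (ground M - I) \<le> rank M (ground M)" by (rule rank_mono[OF assms(1)]) blast
  ultimately show "rank M (ground M - I) = rank M (ground M)" using basis_card[OF assms(1) B(1)] by simp
next
  assume h: "rank M (ground M - I) = rank M (ground M)"
  obtain J where J: "J \<subseteq> ground M - I" "indep M J" "card J = rank M (ground M - I)"
    using rank_attained[OF assms(1)] .
  have "basis M J" using basis_of_card[OF assms(1) J(2)] J(3) h by simp
  thus "indep (dual M) I" unfolding dual_def using assms(2) J(1) by auto
qed

lemma in_parallel_of_rank:
  assumes "matroid M" "f \<in> ground M" "g \<in> ground M" "f \<noteq> g"
    "rank M {f} = 1" "rank M {g} = 1" "rank M {f, g} = 1"
  shows "in_parallel M f g"
proof -
  have "indep M {f}" "indep M {g}" "\<not> indep M {f, g}"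
    using indep_iff_rank[OF assms(1)] assms by auto
  thus ?thesis unfolding in_parallel_def circuit_def using assms(2,3,4)
    by (auto simp: insert_Diff_if)
qed

lemma in_series_of_rank:
  assumes "matroid M" "f \<in> ground M" "g \<in> ground M" "f \<noteq> g"
    "rank M (ground M - {f, g}) < rank M (ground M)"
    "rank M (ground M - {f}) = rank M (ground M)" "rank M (ground M - {g}) = rank M (ground M)"
  shows "in_series M f g"
proof -
  have "\<not> indep (dual M) {f, g}" "indep (dual M) {f}" "indep (dual M) {g}"
    using dual_indep_iff[OF assms(1)] assms by simp_all
  moreover have "ground (dual M) = ground M" by (simp add: dual_def)
  ultimately show ?thesis unfolding in_series_def cocircuit_def circuit_def using assms(2,3,4)
    by (auto simp: insert_Diff_if)
qed

section \<open>Deletion, contraction and minors\<close>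

lemma ground_deletion [simp]: "ground (deletion M D) = ground M - D"
  by (simp add: deletion_def)

lemma indep_deletion [simp]: "indep (deletion M D) I \<longleftrightarrow> indep M I \<and> I \<subseteq> ground M - D"
  by (simp add: deletion_def)

lemma ground_contraction [simp]: "ground (contraction M C) = ground M - C"
  by (simp add: contraction_def)

lemma indep_contraction [simp]:
  "indep (contraction M C) I \<longleftrightarrow> I \<subseteq> ground M - C \<and> rank M (I \<union> C) = card I + rank M C"
  by (simp add: contraction_def)

lemma matroid_eqI: "ground (M :: 'a matroid) = ground N \<Longrightarrow> indep M = indep N \<Longrightarrow> M = N"
  by (cases M, cases N) simp

lemma rank_deletion:
  assumes "matroid M" "D \<inter> W = {}"
  shows "rank (deletion M D) W = rank M W"
proof -
  have "I \<subseteq> ground M - D" if "I \<subseteq> W" "indep M I" for I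
    using matroid_indep_subset_ground[OF assms(1)] assms(2) that by blast
  hence "{card I | I. I \<subseteq> W \<and> indep (deletion M D) I} = {card I | I. I \<subseteq> W \<and> indep M I}"
    by auto
  thus ?thesis unfolding rank_def by simp
qed

lemma rank_contraction_singleton:
  assumes "matroid M" "e \<in> ground M" "W \<subseteq> ground M - {e}"
  shows "rank (contraction M {e}) W = rank M (insert e W) - rank M {e}"
proof -
  let ?S = "{card I | I. I \<subseteq> W \<and> indep (contraction M {e}) I}"
  have "finite W" using matroid_finite_ground[OF assms(1)] assms(3) finite_subset by blast
  moreover have "?S \<subseteq> card ` Pow W" by blast
  ultimately have fin: "finite ?S" using finite_subset by blast
  have upper: "y \<le> rank M (insert e W) - rank M {e}" if "y \<in> ?S" for y
  proof -
    obtain I where I: "y = card I" "I \<subseteq> W" "rank M (insert e I) = card I + rank M {e}"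
      using \<open>y \<in> ?S\<close> by auto
    have "rank M (insert e I) \<le> rank M (insert e W)" using I(2) by (intro rank_mono[OF assms(1)]) blast
    thus ?thesis using I by simp
  qed
  have attained: "rank M (insert e W) - rank M {e} \<in> ?S"
  proof (cases "rank M {e} = 0")
    case True
    have loop_free: "rank M (insert e X) = rank M X" for X
      using rank_insert_eq_mono[OF assms(1), of "{}" X e] True rank_empty[OF assms(1)] by simp
    obtain I where I: "I \<subseteq> W" "indep M I" "card I = rank M W" using rank_attained[OF assms(1)] .
    have "I \<subseteq> W \<and> indep (contraction M {e}) I"
      using I assms(3) loop_free[of I] rank_indep[OF assms(1) I(2)] True by auto
    hence "card I \<in> ?S" by blast
    thus ?thesis using loop_free[of W] I(3) True by simp
  next
    case False
    hence r1: "rank M {e} = 1" using rank_le_card[OF assms(1), of "{e}"] by simp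
    hence "indep M {e}" using indep_iff_rank[OF assms(1)] by simp
    then obtain J where J: "{e} \<subseteq> J" "J \<subseteq> insert e W" "indep M J" "card J = rank M (insert e W)"
      using indep_extend_to_rank[OF assms(1), of "{e}" "insert e W"] by auto
    have fJ: "finite J" using matroid_indep_finite[OF assms(1) J(3)] .
    have "card J \<ge> 1" using J(1) fJ by (metis One_nat_def Suc_leI card_gt_0_iff empty_iff insert_subset)
    have "J - {e} \<subseteq> W \<and> indep (contraction M {e}) (J - {e})"
      using J fJ assms(3) r1 rank_indep[OF assms(1) J(3)] \<open>card J \<ge> 1\<close> by (auto simp: insert_absorb)
    hence "card (J - {e}) \<in> ?S" by blast
    thus ?thesis using J(1,4) fJ r1 \<open>card J \<ge> 1\<close> by simp
  qed
  show ?thesis unfolding rank_def[of "contraction M {e}"] by (rule Max_eqI[OF fin upper attained])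
qed

lemma minor_of_deletion:
  assumes "matroid M" "C \<subseteq> ground M" "D \<subseteq> ground M" "C \<inter> D = {}" "e \<in> D"
  shows "is_minor (deletion (contraction M C) D) (deletion M {e})"
  unfolding is_minor_def
proof (intro exI conjI)
  show "C \<subseteq> ground (deletion M {e})" "D - {e} \<subseteq> ground (deletion M {e})" "C \<inter> (D - {e}) = {}"
    using assms by auto
  have "indep (deletion (contraction M C) D) I
      \<longleftrightarrow> indep (deletion (contraction (deletion M {e}) C) (D - {e})) I" for I
  proof (cases "I \<subseteq> ground M - C - D")
    case True
    have "{e} \<inter> (I \<union> C) = {}" "{e} \<inter> C = {}" using True assms(4,5) by auto
    hence "rank (deletion M {e}) (I \<union> C) = rank M (I \<union> C)" "rank (deletion M {e}) C = rank M C"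
      using rank_deletion[OF assms(1)] by blast+
    thus ?thesis using True assms by auto
  qed (use assms in auto)
  moreover have "ground (deletion (contraction M C) D) = ground (deletion (contraction (deletion M {e}) C) (D - {e}))"
    using assms by auto
  ultimately show "deletion (contraction M C) D = deletion (contraction (deletion M {e}) C) (D - {e})"
    by (intro matroid_eqI ext) blast+
qed

lemma minor_of_contraction:
  assumes "matroid M" "C \<subseteq> ground M" "D \<subseteq> ground M" "C \<inter> D = {}" "e \<in> C"
  shows "is_minor (deletion (contraction M C) D) (contraction M {e})"
  unfolding is_minor_def
proof (intro exI conjI)
  show "C - {e} \<subseteq> ground (contraction M {e})" "D \<subseteq> ground (contraction M {e})" "(C - {e}) \<inter> D = {}"
    using assms by auto
  have "indep (deletion (contraction M C) D) I
      \<longleftrightarrow> indep (deletion (contraction (contraction M {e}) (C - {e})) D) I" for I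
  proof (cases "I \<subseteq> ground M - C - D")
    case True
    have e: "e \<in> ground M" and sub: "I \<union> (C - {e}) \<subseteq> ground M - {e}" "C - {e} \<subseteq> ground M - {e}"
      using True assms by auto
    have "insert e (I \<union> (C - {e})) = I \<union> C" "insert e (C - {e}) = C" using assms(5) by auto
    hence "rank (contraction M {e}) (I \<union> (C - {e})) = rank M (I \<union> C) - rank M {e}"
      "rank (contraction M {e}) (C - {e}) = rank M C - rank M {e}"
      using rank_contraction_singleton[OF assms(1) e sub(1)] rank_contraction_singleton[OF assms(1) e sub(2)]
      by simp_all
    moreover have "rank M {e} \<le> rank M C" "rank M C \<le> rank M (I \<union> C)"
      using assms by (auto intro: rank_mono[OF assms(1)])
    ultimately show ?thesis using True assms by auto
  qed (use assms in auto)
  moreover have "ground (deletion (contraction M C) D) = ground (deletion (contraction (contraction M {e}) (C - {e})) D)"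
    using assms by auto
  ultimately show "deletion (contraction M C) D = deletion (contraction (contraction M {e}) (C - {e})) D"
    by (intro matroid_eqI ext) blast+
qed

lemma basis_exists:
  assumes "finite (ground N)" "\<And>I. indep N I \<Longrightarrow> I \<subseteq> ground N" "indep N {}"
  obtains B where "basis N B"
proof -
  let ?F = "{I. indep N I}"
  have "?F \<subseteq> Pow (ground N)" using assms(2) by blast
  hence finF: "finite ?F" using assms(1) finite_subset by blast
  have "card ` ?F \<noteq> {}" using assms(3) by blast
  then obtain B where B: "B \<in> ?F" "card B = Max (card ` ?F)"
    using Max_in[of "card ` ?F"] finF by (metis finite_imageI imageE)
  have "basis N B"
    unfolding basis_def
  proof (intro conjI allI impI)
    show "indep N B" using B by simp
    fix J assume J: "indep N J \<and> B \<subseteq> J"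
    have "card J \<le> card B" using B(2) J finF by (simp add: Max_ge)
    moreover have "finite J" using J assms(1,2) finite_subset by blast
    ultimately show "J = B" using J card_seteq by blast
  qed
  thus thesis using that by blast
qed

lemma rank_insert_of_nonloop_minor:
  assumes "N = deletion (contraction M C) D" "f \<in> ground N" "\<not> loop N f"
  shows "rank M (insert f C) = rank M C + 1"
proof -
  have "indep N {f}"
    using assms unfolding loop_def circuit_def by auto
  thus ?thesis using assms(1) by simp
qed

lemma rank_insert_of_noncoloop_minor:
  assumes "matroid M" "N = deletion (contraction M C) D" "f \<in> ground N" "\<not> coloop N f"
  shows "rank M (insert f ((ground N - {f}) \<union> C)) = rank M ((ground N - {f}) \<union> C)"
proof (rule ccontr)
  let ?G = "ground N"
  assume ne: "rank M (insert f ((?G - {f}) \<union> C)) \<noteq> rank M ((?G - {f}) \<union> C)"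
  have sub: "indep N I \<Longrightarrow> I \<subseteq> ?G" for I using assms(2) by auto
  obtain B0 where "basis N B0"
    using basis_exists[of N] assms(2) matroid_finite_ground[OF assms(1)] sub by auto
  have "coloop N f"
    unfolding coloop_def cocircuit_def circuit_def
  proof (intro conjI ballI)
    show "{f} \<subseteq> ground (dual N)" using assms(3) by (simp add: dual_def)
    show "indep (dual N) ({f} - {x})" if "x \<in> {f}" for x
      using that \<open>basis N B0\<close> assms(3) by (auto simp: dual_def)
    show "\<not> indep (dual N) {f}"
    proof
      assume "indep (dual N) {f}"
      then obtain B where B: "basis N B" "f \<notin> B" by (auto simp: dual_def)
      have iB: "indep N B" using B(1) basis_def by blast
      have BG: "B \<subseteq> ?G" using sub[OF iB] .
      have "\<not> indep N (insert f B)" using B unfolding basis_def by blast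
      hence "rank M (insert f B \<union> C) \<noteq> card (insert f B) + rank M C"
        using assms(2,3) BG by auto
      moreover have "rank M (B \<union> C) = card B + rank M C" using iB assms(2) by simp
      moreover have "finite B"
        using BG assms(2) matroid_finite_ground[OF assms(1)] by (auto intro: finite_subset)
      moreover have "rank M (insert f (B \<union> C)) \<le> rank M (B \<union> C) + 1"
        by (rule rank_insert_le[OF assms(1)])
      moreover have "rank M (B \<union> C) \<le> rank M (insert f (B \<union> C))" by (rule rank_mono[OF assms(1)]) blast
      ultimately have "rank M (insert f (B \<union> C)) = rank M (B \<union> C)" using B(2) by simp
      moreover have "B \<union> C \<subseteq> (?G - {f}) \<union> C" using BG B(2) by blast
      ultimately show False using rank_insert_eq_mono[OF assms(1), of "B \<union> C" "(?G - {f}) \<union> C" f] ne by simp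
    qed
  qed
  thus False using assms(4) by simp
qed

lemma minor_of_deletion_and_contraction:
  assumes "matroid M"
    and "C1 \<subseteq> ground M" "D1 \<subseteq> ground M" "C1 \<inter> D1 = {}" "N = deletion (contraction M C1) D1"
    and "C2 \<subseteq> ground M" "D2 \<subseteq> ground M" "C2 \<inter> D2 = {}" "N = deletion (contraction M C2) D2"
    and "e \<in> C1" "e \<in> D2"
  shows "is_minor N (deletion M {e}) \<and> is_minor N (contraction M {e})"
  using minor_of_deletion[OF assms(1,6-8,11)] minor_of_contraction[OF assms(1-4,10)] assms(5,9) by simp

section \<open>Rank functions\<close>

locale rank_function =
  fixes Y :: "'b set" and R :: "'b set \<Rightarrow> int"
  assumes finite_ground: "finite Y"
    and R_empty: "R {} = 0"
    and R_insert_ge: "Z \<subseteq> Y \<Longrightarrow> x \<in> Y \<Longrightarrow> R Z \<le> R (insert x Z)"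
    and R_insert_le: "Z \<subseteq> Y \<Longrightarrow> x \<in> Y \<Longrightarrow> R (insert x Z) \<le> R Z + 1"
    and R_submodular: "Z \<subseteq> Y \<Longrightarrow> W \<subseteq> Y \<Longrightarrow> R (Z \<union> W) + R (Z \<inter> W) \<le> R Z + R W"
begin

lemma R_union_bounds:
  assumes "Z \<subseteq> Y" "D \<subseteq> Y"
  shows "R Z \<le> R (Z \<union> D) \<and> R (Z \<union> D) \<le> R Z + int (card D)"
proof -
  have "finite D" using assms(2) finite_ground finite_subset by blast
  thus ?thesis using assms(2)
  proof (induction D rule: finite_induct)
    case (insert x F)
    have "Z \<union> F \<subseteq> Y" "x \<in> Y" using assms(1) insert.prems by auto
    thus ?case using insert R_insert_ge[of "Z \<union> F" x] R_insert_le[of "Z \<union> F" x] by simp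
  qed simp
qed

lemma
  assumes "Z \<subseteq> W" "W \<subseteq> Y"
  shows R_mono: "R Z \<le> R W" and R_le_card_diff: "R W \<le> R Z + int (card (W - Z))"
proof -
  have "Z \<union> (W - Z) = W" using assms(1) by blast
  thus "R Z \<le> R W" "R W \<le> R Z + int (card (W - Z))"
    using R_union_bounds[of Z "W - Z"] assms by auto
qed

lemma R_le_card: "Z \<subseteq> Y \<Longrightarrow> R Z \<le> int (card Z)"
  using R_le_card_diff[of "{}" Z] R_empty by simp

lemma R_singleton_le: "x \<in> Y \<Longrightarrow> R {x} \<le> 1"
  using R_le_card[of "{x}"] by simp

lemma R_indep_subset:
  assumes "Z \<subseteq> W" "W \<subseteq> Y" "R W = int (card W)"
  shows "R Z = int (card Z)"
proof -
  have "finite W" using assms(2) finite_ground finite_subset by blast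
  hence "card W = card Z + card (W - Z)"
    using assms(1) card_Un_disjoint[of Z "W - Z"] by (simp add: Un_absorb1 Un_Diff_cancel finite_subset)
  thus ?thesis using R_le_card_diff[OF assms(1,2)] R_le_card[of Z] assms by auto
qed

lemma R_insert_eq_mono:
  assumes "Z \<subseteq> W" "W \<subseteq> Y" "x \<in> Y" "R (insert x Z) = R Z"
  shows "R (insert x W) = R W"
proof -
  have "R (insert x Z \<union> W) + R (insert x Z \<inter> W) \<le> R (insert x Z) + R W"
    using assms by (intro R_submodular) auto
  moreover have "insert x Z \<union> W = insert x W" using assms by blast
  moreover have "R Z \<le> R (insert x Z \<inter> W)" using assms by (intro R_mono) auto
  moreover have "R W \<le> R (insert x W)" using R_insert_ge assms by blast
  ultimately show ?thesis using assms(4) by simp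
qed

lemma R_union_spanned:
  assumes "Z \<subseteq> Y" "W \<subseteq> Y" "\<forall>w\<in>W. R (insert w Z) = R Z"
  shows "R (Z \<union> W) = R Z"
proof -
  have "finite W" using assms(2) finite_ground finite_subset by blast
  thus ?thesis using assms(2,3)
  proof (induction W rule: finite_induct)
    case (insert w F)
    have "R (insert w (Z \<union> F)) = R (Z \<union> F)"
      by (rule R_insert_eq_mono[of Z]) (use insert assms(1) in auto)
    thus ?case using insert by simp
  qed simp
qed

lemma R_union_le:
  assumes "A \<subseteq> Y" "B \<subseteq> Y" "C \<subseteq> A \<inter> B"
  shows "R (A \<union> B) \<le> R A + R B - R C"
proof -
  have "R C \<le> R (A \<inter> B)" using assms by (intro R_mono) auto
  thus ?thesis using R_submodular[OF assms(1,2)] by simp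
qed

lemma R_eq_card_if_drops:
  assumes "Z \<subseteq> Y" "\<forall>e\<in>Z. R (Z - {e}) < R Z"
  shows "R Z = int (card Z)"
  using assms
proof (induction "card Z" arbitrary: Z rule: less_induct)
  case less
  show ?case
  proof (cases "Z = {}")
    case False
    then obtain e where e: "e \<in> Z" by blast
    have fZ: "finite Z" using less.prems finite_ground finite_subset by blast
    have sub: "Z - {e} \<subseteq> Y" using less.prems by blast
    have "insert e (Z - {e}) = Z" using e by blast
    hence "R Z \<le> R (Z - {e}) + 1" using R_insert_le[OF sub, of e] e less.prems(1) by auto
    moreover have "R (Z - {e}) < R Z" using less.prems(2) e by blast
    ultimately have R_drop: "R (Z - {e}) = R Z - 1" by linarith
    have drops: "\<forall>e'\<in>Z - {e}. R (Z - {e} - {e'}) < R (Z - {e})"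
    proof
      fix e' assume e': "e' \<in> Z - {e}"
      have "(Z - {e}) \<union> (Z - {e'}) = Z" "(Z - {e}) \<inter> (Z - {e'}) = Z - {e} - {e'}" using e' by blast+
      moreover have "Z - {e'} \<subseteq> Y" using less.prems(1) by blast
      ultimately have "R Z + R (Z - {e} - {e'}) \<le> R (Z - {e}) + R (Z - {e'})"
        using R_submodular[OF sub] by metis
      moreover have "R (Z - {e'}) < R Z" using less.prems(2) e' by blast
      ultimately show "R (Z - {e} - {e'}) < R (Z - {e})" using R_drop by linarith
    qed
    have "card (Z - {e}) < card Z" using fZ e by (rule card_Diff1_less)
    hence "R (Z - {e}) = int (card (Z - {e}))" by (rule less.hyps[OF _ sub drops])
    moreover have "card Z = Suc (card (Z - {e}))" using fZ e by (rule card_Suc_Diff1[symmetric])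
    ultimately show ?thesis using R_drop by simp
  qed (simp add: R_empty)
qed

lemma rank_function_subset:
  assumes "Y' \<subseteq> Y"
  shows "rank_function Y' R"
proof
  show "finite Y'" using assms finite_ground finite_subset by blast
  show "R {} = 0" by (rule R_empty)
next
  fix Z x assume "Z \<subseteq> Y'" "x \<in> Y'"
  hence "Z \<subseteq> Y" "x \<in> Y" using assms by auto
  thus "R Z \<le> R (insert x Z)" "R (insert x Z) \<le> R Z + 1" by (rule R_insert_ge, rule R_insert_le)
next
  fix Z W assume "Z \<subseteq> Y'" "W \<subseteq> Y'"
  hence "Z \<subseteq> Y" "W \<subseteq> Y" using assms by auto
  thus "R (Z \<union> W) + R (Z \<inter> W) \<le> R Z + R W" by (rule R_submodular)
qed

lemma rank_function_contract:
  assumes "e \<in> Y"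
  shows "rank_function (Y - {e}) (\<lambda>Z. R (insert e Z) - R {e})"
proof unfold_locales
  fix Z x assume a: "Z \<subseteq> Y - {e}" "x \<in> Y - {e}"
  have "insert e (insert x Z) = insert x (insert e Z)" by blast
  thus "R (insert e Z) - R {e} \<le> R (insert e (insert x Z)) - R {e}"
       "R (insert e (insert x Z)) - R {e} \<le> R (insert e Z) - R {e} + 1"
    using R_insert_ge[of "insert e Z" x] R_insert_le[of "insert e Z" x] a assms by auto
next
  fix Z W assume a: "Z \<subseteq> Y - {e}" "W \<subseteq> Y - {e}"
  have "insert e (Z \<union> W) = insert e Z \<union> insert e W" "insert e (Z \<inter> W) = insert e Z \<inter> insert e W"
    by blast+
  thus "R (insert e (Z \<union> W)) - R {e} + (R (insert e (Z \<inter> W)) - R {e})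
          \<le> R (insert e Z) - R {e} + (R (insert e W) - R {e})"
    using R_submodular[of "insert e Z" "insert e W"] a assms by auto
qed (use finite_ground in auto)

end

section \<open>Unique parallel sets\<close>

text \<open>\<open>f\<close> and \<open>p\<close> are parallel non-loops in the contraction of \<open>R\<close> by \<open>Z\<close>.\<close>
definition parallel_over :: "('b set \<Rightarrow> int) \<Rightarrow> 'b \<Rightarrow> 'b \<Rightarrow> 'b set \<Rightarrow> bool" where
  "parallel_over R f p Z \<longleftrightarrow>
     R (insert f Z) = R Z + 1 \<and> R (insert p Z) = R Z + 1 \<and> R (insert f (insert p Z)) = R Z + 1"

definition rank_parallel :: "('b set \<Rightarrow> int) \<Rightarrow> 'b \<Rightarrow> 'b \<Rightarrow> bool" where
  "rank_parallel R f x \<longleftrightarrow> R {f} = 1 \<and> R {x} = 1 \<and> R {f, x} = 1"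

definition rank_series :: "'b set \<Rightarrow> ('b set \<Rightarrow> int) \<Rightarrow> 'b \<Rightarrow> 'b \<Rightarrow> bool" where
  "rank_series Y R f x \<longleftrightarrow> R (Y - {f, x}) < R Y \<and> R (Y - {f}) = R Y \<and> R (Y - {x}) = R Y"

locale unique_parallel_set = rank_function Y R
  for Y :: "'b set" and R +
  fixes f p :: 'b and S :: "'b set"
  assumes f_in: "f \<in> Y" and p_in: "p \<in> Y" and f_ne_p: "f \<noteq> p"
    and S_sub: "S \<subseteq> Y - {f, p}"
    and parallel_over_S: "parallel_over R f p S"
    and unique: "\<And>S'. S' \<subseteq> Y - {f, p} \<Longrightarrow> parallel_over R f p S' \<Longrightarrow> S' = S"
begin

abbreviation T :: "'b set" where "T \<equiv> Y - {f, p} - S"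

lemma S_in: "S \<subseteq> Y" "f \<notin> S" "p \<notin> S" "finite S"
  using S_sub finite_ground finite_subset by auto

lemma R_insert_f_S: "R (insert f S) = R S + 1"
  and R_insert_p_S: "R (insert p S) = R S + 1"
  and R_insert_f_p_S: "R (insert f (insert p S)) = R S + 1"
  using parallel_over_S unfolding parallel_over_def by auto

lemma R_S: "R S = int (card S)"
proof -
  have "R (S - {e}) < R S" if e: "e \<in> S" for e
  proof (rule ccontr)
    let ?S' = "S - {e}"
    assume "\<not> R ?S' < R S"
    moreover have "R ?S' \<le> R S" using S_in by (intro R_mono) auto
    ultimately have eq: "R (insert e ?S') = R ?S'" using e by (simp add: insert_absorb)
    have e_in: "e \<in> Y" using e S_in by blast
    have "R (insert e (insert f ?S')) = R (insert f ?S')"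
      "R (insert e (insert p ?S')) = R (insert p ?S')"
      "R (insert e (insert f (insert p ?S'))) = R (insert f (insert p ?S'))"
      by (rule R_insert_eq_mono[OF _ _ e_in eq]; use S_in f_in p_in in auto)+
    moreover have "insert e (insert f ?S') = insert f S" "insert e (insert p ?S') = insert p S"
      "insert e (insert f (insert p ?S')) = insert f (insert p S)" using e by auto
    ultimately have "parallel_over R f p ?S'"
      unfolding parallel_over_def using R_insert_f_S R_insert_p_S R_insert_f_p_S eq e
      by (simp add: insert_absorb)
    with S_sub have "?S' = S" by (intro unique) auto
    thus False using e by blast
  qed
  thus ?thesis using R_eq_card_if_drops S_in(1) by blast
qed

lemma R_insert_f_S_card: "R (insert f S) = int (card (insert f S))"
  and R_insert_p_S_card: "R (insert p S) = int (card (insert p S))"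
  using R_insert_f_S R_insert_p_S R_S S_in by simp_all

lemma insert_f_S_in: "insert f S \<subseteq> Y" and insert_p_S_in: "insert p S \<subseteq> Y"
  using S_in f_in p_in by auto

lemma R_singleton_f: "R {f} = 1" and R_singleton_p: "R {p} = 1"
  using R_indep_subset[OF _ insert_f_S_in R_insert_f_S_card, of "{f}"]
    R_indep_subset[OF _ insert_p_S_in R_insert_p_S_card, of "{p}"] by simp_all

text \<open>If \<open>f\<close> were independent of \<open>insert g S\<close>, that set would be a second parallel set.\<close>
lemma f_spanned_by_insert_S:
  assumes g: "g \<in> T"
  shows "R (insert f (insert g S)) = R (insert g S)"
proof (rule ccontr)
  assume ne: "R (insert f (insert g S)) \<noteq> R (insert g S)"
  have gS: "insert g S \<subseteq> Y" using g S_in by blast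
  let ?a = "R (insert g S)"
  have f1: "R (insert f (insert g S)) = ?a + 1"
    using ne R_insert_ge[OF gS f_in] R_insert_le[OF gS f_in] by simp
  have gpS: "insert p (insert g S) \<subseteq> Y" using gS p_in by blast
  have "R (insert f (insert p S)) = R (insert p S)" using R_insert_p_S R_insert_f_p_S by simp
  hence f_cl: "R (insert f (insert p (insert g S))) = R (insert p (insert g S))"
    by (rule R_insert_eq_mono[OF _ gpS f_in, rotated]) blast
  have "R (insert f (insert g S)) \<le> R (insert f (insert p (insert g S)))"
    by (rule R_mono) (use gpS f_in in auto)
  hence f2: "R (insert p (insert g S)) = ?a + 1"
    using f_cl f1 R_insert_ge[OF gS p_in] R_insert_le[OF gS p_in] by simp
  have "parallel_over R f p (insert g S)"
    unfolding parallel_over_def using f1 f2 f_cl by simp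
  with g S_sub have "insert g S = S" by (intro unique) auto
  thus False using g by blast
qed

lemma R_Y: "R Y = int (card S) + 1"
proof -
  have Y_eq: "Y = insert f S \<union> insert p T" using S_sub f_in p_in by auto
  have "R (insert w (insert f S)) = R (insert f S)" if w: "w \<in> insert p T" for w
  proof (cases "w = p")
    case True
    then show ?thesis using R_insert_f_S R_insert_f_p_S by (simp add: insert_commute)
  next
    case False
    hence wT: "w \<in> T" using w by blast
    have w_in: "w \<in> Y" using wT by blast
    have "R (insert f (insert w S)) = R (insert w S)" using f_spanned_by_insert_S[OF wT] .
    moreover have "R (insert w S) \<le> R S + 1" using R_insert_le[OF S_in(1) w_in] .
    moreover have "R (insert f S) \<le> R (insert w (insert f S))" using R_insert_ge[OF insert_f_S_in w_in] .
    moreover have "insert f (insert w S) = insert w (insert f S)" by blast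
    ultimately show ?thesis using R_insert_f_S by simp
  qed
  moreover have "insert p T \<subseteq> Y" using p_in by blast
  ultimately have "R (insert f S \<union> insert p T) = R (insert f S)"
    using R_union_spanned[OF insert_f_S_in] by blast
  thus ?thesis using Y_eq R_insert_f_S R_S by simp
qed

lemma R_insert_f_p_drop:
  assumes e: "e \<in> S"
  shows "R (insert f (insert p (S - {e}))) = int (card S) + 1"
proof (rule ccontr)
  let ?S' = "S - {e}"
  assume ne: "R (insert f (insert p ?S')) \<noteq> int (card S) + 1"
  have n: "card S = Suc (card ?S')" using S_in(4) e by (rule card_Suc_Diff1[symmetric])
  have "f \<notin> ?S'" "p \<notin> ?S'" "finite ?S'" using S_in by auto
  hence "card (insert f ?S') = Suc (card ?S')" "card (insert p ?S') = Suc (card ?S')"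
    by (simp_all add: card_insert_disjoint)
  hence cards: "card (insert f ?S') = card S" "card (insert p ?S') = card S" using n by linarith+
  have a: "R (insert f ?S') = int (card S)"
    using R_indep_subset[OF _ insert_f_S_in R_insert_f_S_card, of "insert f ?S'"] cards by auto
  have b: "R (insert p ?S') = int (card S)"
    using R_indep_subset[OF _ insert_p_S_in R_insert_p_S_card, of "insert p ?S'"] cards by auto
  have "R ?S' = int (card ?S')" using R_indep_subset[OF _ S_in(1) R_S, of ?S'] by blast
  hence c: "R ?S' = int (card S) - 1" using n by linarith
  have "R (insert f (insert p ?S')) \<le> R (insert f (insert p S))"
    by (rule R_mono) (use insert_f_S_in insert_p_S_in in auto)
  moreover have "R (insert f ?S') \<le> R (insert f (insert p ?S'))"
    by (rule R_mono) (use insert_f_S_in insert_p_S_in in auto)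
  ultimately have "R (insert f (insert p ?S')) = int (card S)"
    using ne a R_insert_f_p_S R_S by linarith
  hence "parallel_over R f p ?S'"
    unfolding parallel_over_def using a b c by simp
  with S_sub have "?S' = S" by (intro unique) auto
  thus False using e by blast
qed

lemma partner_if_S_empty:
  assumes "S = {}" "Y - {f, p} \<noteq> {}"
  shows "\<exists>x\<in>Y - {f, p}. rank_parallel R f x"
proof -
  obtain g where g: "g \<in> Y - {f, p}" using assms(2) by blast
  have "R {f, g} = R {g}" using f_spanned_by_insert_S[of g] g assms(1) by (simp add: insert_commute)
  moreover have "R {f} \<le> R {f, g}" by (rule R_mono) (use f_in g in auto)
  ultimately have "rank_parallel R f g"
    unfolding rank_parallel_def using R_singleton_f R_singleton_le[of g] g by simp
  thus ?thesis using g by blast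
qed

lemma partner_if_T_empty:
  assumes "S \<noteq> {}" "T = {}"
  shows "\<exists>x\<in>Y - {f, p}. rank_series Y R f x"
proof -
  obtain e where e: "e \<in> S" using assms(1) by blast
  have Y_eq: "Y = insert f (insert p S)" using assms(2) S_sub f_in p_in by auto
  have "Y - {f, e} = insert p (S - {e})" "Y - {f} = insert p S"
    "Y - {e} = insert f (insert p (S - {e}))"
    using Y_eq f_ne_p S_in e by auto
  moreover have "R (insert p (S - {e})) = int (card (insert p (S - {e})))"
    by (rule R_indep_subset[OF _ insert_p_S_in R_insert_p_S_card]) blast
  moreover have "card (insert p (S - {e})) = card S"
    using S_in e by (metis card_Suc_Diff1 card.insert finite_Diff insert_iff Diff_iff)
  ultimately have "rank_series Y R f e"
    unfolding rank_series_def using R_Y R_insert_p_S R_S R_insert_f_p_drop[OF e] by simp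
  thus ?thesis using e S_sub by blast
qed

lemma unique_parallel_set_delete:
  assumes g: "g \<in> T"
  shows "unique_parallel_set (Y - {g}) R f p S"
proof (intro unique_parallel_set.intro rank_function_subset)
  show "unique_parallel_set_axioms (Y - {g}) R f p S"
  proof
    show "f \<in> Y - {g}" "p \<in> Y - {g}" "S \<subseteq> Y - {g} - {f, p}" using f_in p_in g S_sub by auto
    fix S' assume "S' \<subseteq> Y - {g} - {f, p}" "parallel_over R f p S'"
    thus "S' = S" by (intro unique) auto
  qed (rule f_ne_p, rule parallel_over_S)
qed blast

lemma unique_parallel_set_contract:
  assumes e: "e \<in> S"
  shows "unique_parallel_set (Y - {e}) (\<lambda>Z. R (insert e Z) - R {e}) f p (S - {e})"
proof (intro unique_parallel_set.intro rank_function_contract)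
  let ?R' = "\<lambda>Z. R (insert e Z) - R {e}"
  have shift: "parallel_over ?R' f p Z \<longleftrightarrow> parallel_over R f p (insert e Z)" for Z
    unfolding parallel_over_def by (simp add: insert_commute)
  show "unique_parallel_set_axioms (Y - {e}) ?R' f p (S - {e})"
  proof
    show "f \<in> Y - {e}" "p \<in> Y - {e}" "S - {e} \<subseteq> Y - {e} - {f, p}" using f_in p_in e S_sub by auto
    show "parallel_over ?R' f p (S - {e})" using shift parallel_over_S e by (simp add: insert_absorb)
    fix Z assume Z: "Z \<subseteq> Y - {e} - {f, p}" "parallel_over ?R' f p Z"
    hence "insert e Z = S" using shift e S_sub by (intro unique) auto
    thus "Z = S - {e}" using Z(1) by blast
  qed (rule f_ne_p)
qed (use e S_in in blast)

end

context unique_parallel_set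
begin

text \<open>How a partner of \<open>f\<close> in \<open>R\<close> with \<open>g\<close> deleted, resp. with \<open>e\<close> contracted, shows up in
  \<open>R\<close> itself when \<open>f\<close> has no partner in \<open>R\<close>.\<close>
definition triad :: "'b \<Rightarrow> 'b \<Rightarrow> bool" where
  "triad g x \<longleftrightarrow> R (Y - {g, f, x}) < R Y \<and> R (Y - {g, x}) = R Y \<and> R (Y - {f, x}) = R Y"

definition triangle :: "'b \<Rightarrow> 'b \<Rightarrow> bool" where
  "triangle z e \<longleftrightarrow> R {f, e} = 2 \<and> R {z, e} = 2 \<and> R {f, z, e} = 2 \<and> R {f, z} = 2 \<and> R {z} = 1"

context
  assumes no_partner: "\<And>x. x \<in> Y - {f, p} \<Longrightarrow> \<not> rank_parallel R f x \<and> \<not> rank_series Y R f x"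
begin

lemma triad_of_deletion_partner:
  assumes g: "g \<in> T" and x: "x \<in> Y - {g} - {f, p}"
    and partner: "rank_parallel R f x \<or> rank_series (Y - {g}) R f x"
  shows "x \<in> S \<and> triad g x"
proof -
  let ?Y' = "Y - {g}"
  have series: "rank_series ?Y' R f x" using partner no_partner x by blast
  have "R (insert f S) \<le> R ?Y'" by (rule R_mono) (use f_in g S_in in auto)
  moreover have "R ?Y' \<le> R Y" by (rule R_mono) auto
  ultimately have R_Y': "R ?Y' = R Y" using R_insert_f_S R_S R_Y by simp
  have a1: "R (?Y' - {f, x}) < R Y" and a3: "R (?Y' - {x}) = R Y"
    using series R_Y' unfolding rank_series_def by auto
  have "R (?Y' - {x}) \<le> R (Y - {x})" "R (Y - {x}) \<le> R Y" by (rule R_mono; auto)+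
  hence b2: "R (Y - {x}) = R Y" using a3 by simp
  have "R (?Y' - {f}) = R Y" using series R_Y' unfolding rank_series_def by simp
  moreover have "R (?Y' - {f}) \<le> R (Y - {f})" "R (Y - {f}) \<le> R Y" by (rule R_mono; auto)+
  ultimately have b1: "R (Y - {f}) = R Y" by simp
  have b3: "R (Y - {f, x}) = R Y"
  proof (rule ccontr)
    assume "R (Y - {f, x}) \<noteq> R Y"
    moreover have "R (Y - {f, x}) \<le> R Y" by (rule R_mono) auto
    ultimately have "rank_series Y R f x" unfolding rank_series_def using b1 b2 by simp
    thus False using no_partner x by blast
  qed
  have xS: "x \<in> S"
  proof (rule ccontr)
    assume "x \<notin> S"
    hence sub: "insert p S \<subseteq> Y - {g, f, x}" using S_in p_in f_ne_p x g by auto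
    have "R (insert f (insert p S)) = R (insert p S)" using R_insert_p_S R_insert_f_p_S by simp
    hence "R (insert f (Y - {g, f, x})) = R (Y - {g, f, x})"
      by (rule R_insert_eq_mono[OF sub _ f_in, rotated]) blast
    moreover have "insert f (Y - {g, f, x}) = ?Y' - {x}" "Y - {g, f, x} = ?Y' - {f, x}"
      using f_in x g by auto
    ultimately show False using a1 a3 by simp
  qed
  have "Y - {g, f, x} = ?Y' - {f, x}" "Y - {g, x} = ?Y' - {x}" by auto
  thus ?thesis unfolding triad_def using xS a1 a3 b3 by simp
qed

lemma triangle_of_contraction_partner:
  assumes e: "e \<in> S" and z: "z \<in> Y - {e} - {f, p}"
    and partner: "rank_parallel (\<lambda>Z. R (insert e Z) - R {e}) f z
      \<or> rank_series (Y - {e}) (\<lambda>Z. R (insert e Z) - R {e}) f z"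
  shows "z \<in> T \<and> triangle z e"
proof -
  let ?R' = "\<lambda>Z. R (insert e Z) - R {e}"
  have e_in: "e \<in> Y" and ef: "e \<noteq> f" using e S_in by auto
  have z_in: "z \<in> Y" and zX: "z \<in> Y - {f, p}" and ze: "z \<noteq> e" using z by auto
  have R_e: "R {e} = 1" using R_indep_subset[OF _ S_in(1) R_S, of "{e}"] e by simp
  have "\<not> rank_series (Y - {e}) ?R' f z"
  proof
    assume "rank_series (Y - {e}) ?R' f z"
    moreover have "insert e (Y - {e} - {f, z}) = Y - {f, z}" "insert e (Y - {e}) = Y"
      "insert e (Y - {e} - {f}) = Y - {f}" "insert e (Y - {e} - {z}) = Y - {z}"
      using e_in ef ze by auto
    ultimately have "rank_series Y R f z" unfolding rank_series_def by simp
    thus False using no_partner zX by blast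
  qed
  hence "rank_parallel ?R' f z" using partner by blast
  hence t1: "R {e, f} = 2" and t2: "R {e, z} = 2" and t3: "R {e, f, z} = 2"
    using R_e unfolding rank_parallel_def by simp_all
  have rz: "R {z} = 1"
    using R_insert_le[of "{z}" e] R_singleton_le[OF z_in] z_in e_in t2 by (simp add: insert_commute)
  have "R {f} \<le> R {f, z}" by (rule R_mono) (use f_in z_in in auto)
  moreover have "R {f, z} \<le> R {z} + 1" using R_insert_le[of "{z}" f] z_in f_in by simp
  moreover have "R {f, z} \<noteq> 1" using no_partner[OF zX] R_singleton_f rz unfolding rank_parallel_def by auto
  ultimately have rfz: "R {f, z} = 2" using R_singleton_f rz by simp
  have zT: "z \<in> T"
  proof (rule ccontr)
    assume "z \<notin> T"
    hence zS: "z \<in> S" using zX by blast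
    have "R {e, f, z} = int (card {e, f, z})"
      by (rule R_indep_subset[OF _ insert_f_S_in R_insert_f_S_card]) (use zS e in blast)
    moreover have "z \<noteq> f" using zS S_in by blast
    hence "card {e, f, z} = 3" using ef ze by simp
    ultimately show False using t3 by simp
  qed
  have "R {f, e} = 2" "R {z, e} = 2" "R {f, z, e} = 2" using t1 t2 t3 by (simp_all add: insert_commute)
  thus ?thesis unfolding triangle_def using zT rfz rz by blast
qed

end

text \<open>Orthogonality of the circuit \<open>{f, z, e}\<close> and the cocircuit inside \<open>{g, f, x}\<close>.\<close>
lemma triad_triangle_orthogonal:
  assumes "g \<in> T" "x \<in> S" "triad g x" "e \<in> S" "z \<in> T" "triangle z e"
  shows "z = g \<or> x = e"
proof (rule ccontr)
  assume ne: "\<not> (z = g \<or> x = e)"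
  have sub: "{z, e} \<subseteq> Y - {g, f, x}" using ne assms S_in by auto
  have "R (insert f {z, e}) = R {z, e}" using assms(6) unfolding triangle_def by simp
  hence "R (insert f (Y - {g, f, x})) = R (Y - {g, f, x})"
    by (rule R_insert_eq_mono[OF sub _ f_in, rotated]) blast
  moreover have "insert f (Y - {g, f, x}) = Y - {g, x}" using f_in assms(1,2) S_in by auto
  ultimately show False using assms(3) unfolding triad_def by simp
qed

end

context unique_parallel_set
begin

lemma false_if_S_singleton:
  assumes S: "S = {e}" and z: "z \<in> T" and "triangle z e" "triad z e"
  shows False
proof -
  have z_in: "z \<in> Y" and zS: "z \<notin> S" using z by auto
  have R_Y2: "R Y = 2" using R_Y S by simp
  have tri: "R {f, z} = 2" "R {z} = 1" using \<open>triangle z e\<close> unfolding triangle_def by auto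
  have R_pz: "R {p, z} = 2"
  proof (rule ccontr)
    assume ne: "R {p, z} \<noteq> 2"
    have "R {p, z} \<le> R {z} + 1" using R_insert_le[of "{z}" p] z_in p_in by simp
    moreover have "R {p} \<le> R {p, z}" by (rule R_mono) (use p_in z_in in auto)
    ultimately have "R (insert z {p}) = R {p}" using ne R_singleton_p tri by (simp add: insert_commute)
    moreover have "{p} \<subseteq> Y - {z, f, e}" using p_in f_ne_p S_in S z by auto
    ultimately have "R (insert z (Y - {z, f, e})) = R (Y - {z, f, e})"
      using R_insert_eq_mono[of "{p}" "Y - {z, f, e}" z] z_in by blast
    moreover have "insert z (Y - {z, f, e}) = Y - {f, e}" using z_in z S by auto
    ultimately show False using \<open>triad z e\<close> unfolding triad_def by simp
  qed
  have "R {f, z} \<le> R {f, p, z}" by (rule R_mono) (use f_in p_in z_in in auto)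
  moreover have "R {f, p, z} \<le> R Y" by (rule R_mono) (use f_in p_in z_in in auto)
  ultimately have "R {f, p, z} = 2" using tri R_Y2 by simp
  hence "parallel_over R f p {z}"
    unfolding parallel_over_def using tri R_pz by (simp add: insert_commute)
  with z have "{z} = S" by (intro unique) auto
  thus False using zS by blast
qed

lemma R_f_pair_S:
  assumes "e1 \<in> S" "e2 \<in> S" "e1 \<noteq> e2"
  shows "R {f, e1, e2} = 3"
proof -
  have "R {f, e1, e2} = int (card {f, e1, e2})"
    by (rule R_indep_subset[OF _ insert_f_S_in R_insert_f_S_card]) (use assms in blast)
  moreover have "f \<noteq> e1" "f \<noteq> e2" using assms S_in by blast+
  ultimately show ?thesis using assms(3) by simp
qed

lemma R_p_pair_S:
  assumes "e1 \<in> S" "e2 \<in> S" "e1 \<noteq> e2"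
  shows "R {p, e1, e2} = 3"
proof -
  have "R {p, e1, e2} = int (card {p, e1, e2})"
    by (rule R_indep_subset[OF _ insert_p_S_in R_insert_p_S_card]) (use assms in blast)
  moreover have "p \<noteq> e1" "p \<noteq> e2" using assms S_in by blast+
  ultimately show ?thesis using assms(3) by simp
qed

lemma triangles_distinct:
  assumes "e1 \<in> S" "e2 \<in> S" "e1 \<noteq> e2" "z \<in> T" "triangle z e1" "triangle z e2"
  shows False
proof -
  have in_Y: "f \<in> Y" "z \<in> Y" "e1 \<in> Y" "e2 \<in> Y" using assms f_in S_in by auto
  have "R ({f, z, e1} \<union> {f, z, e2}) \<le> R {f, z, e1} + R {f, z, e2} - R {f, z}"
    by (rule R_union_le) (use in_Y in auto)
  moreover have "R {f, e1, e2} \<le> R ({f, z, e1} \<union> {f, z, e2})" by (rule R_mono) (use in_Y in auto)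
  ultimately show False using assms(5,6) R_f_pair_S[OF assms(1-3)] unfolding triangle_def by simp
qed

text \<open>If \<open>S\<close> has exactly two elements, the two triangles and the two triads force
  \<open>{z1, z2}\<close> to be a second parallel set.\<close>
context
  fixes e1 e2 z1 z2 :: 'b
  assumes S_pair: "S = {e1, e2}" and e12: "e1 \<noteq> e2"
    and z_in_T: "z1 \<in> T" "z2 \<in> T" and z12: "z1 \<noteq> z2"
    and triangles: "triangle z1 e1" "triangle z2 e2"
    and triads: "triad z1 e2" "triad z2 e1"
begin

lemma pair_in_Y: "f \<in> Y" "p \<in> Y" "z1 \<in> Y" "z2 \<in> Y" "e1 \<in> Y" "e2 \<in> Y"
  using f_in p_in z_in_T S_in S_pair by auto

lemma pair_R_Y: "R Y = 3"
  using R_Y S_pair e12 by simp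

lemma pair_R_f_z1_z2: "R {f, z1, z2} = 3"
proof (rule ccontr)
  assume "R {f, z1, z2} \<noteq> 3"
  moreover have "R {f, z1, z2} \<le> int (card {f, z1, z2})" by (rule R_le_card) (use pair_in_Y in auto)
  moreover have "card {f, z1, z2} \<le> 3" by (auto simp: card_insert_if)
  ultimately have le: "R {f, z1, z2} \<le> 2" by linarith
  have "R ({f, z1, z2} \<union> {f, z1, e1}) \<le> R {f, z1, z2} + R {f, z1, e1} - R {f, z1}"
    by (rule R_union_le) (use pair_in_Y in auto)
  moreover have "R (({f, z1, z2} \<union> {f, z1, e1}) \<union> {f, z2, e2})
      \<le> R ({f, z1, z2} \<union> {f, z1, e1}) + R {f, z2, e2} - R {f, z2}"
    by (rule R_union_le) (use pair_in_Y in auto)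
  moreover have "R {f, e1, e2} \<le> R (({f, z1, z2} \<union> {f, z1, e1}) \<union> {f, z2, e2})"
    by (rule R_mono) (use pair_in_Y in auto)
  ultimately show False
    using le triangles R_f_pair_S[of e1 e2] S_pair e12 unfolding triangle_def by simp
qed

lemma pair_R_f_p_e:
  "R {f, p, e1} = 3" "R {f, p, e2} = 3"
proof -
  have "insert f (insert p (S - {e2})) = {f, p, e1}" "insert f (insert p (S - {e1})) = {f, p, e2}"
    using S_pair e12 by auto
  thus "R {f, p, e1} = 3" "R {f, p, e2} = 3"
    using R_insert_f_p_drop[of e1] R_insert_f_p_drop[of e2] S_pair e12 by simp_all
qed

lemma pair_R_p_z:
  assumes "z \<in> {z1, z2}" "triangle z e" "e \<in> S" "R {f, p, e} = 3"
  shows "R {p, z} = 2"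
proof (rule ccontr)
  assume ne: "R {p, z} \<noteq> 2"
  have z_in: "z \<in> Y" and e_in: "e \<in> Y" using assms(1,3) pair_in_Y S_in by auto
  have "R {p, z} \<le> R {z} + 1" using R_insert_le[of "{z}" p] z_in p_in by simp
  moreover have "R {p} \<le> R {p, z}" by (rule R_mono) (use p_in z_in in auto)
  ultimately have le: "R {p, z} \<le> 1" using ne R_singleton_p assms(2) unfolding triangle_def by simp
  have "R ({p, z} \<union> {f, z, e}) \<le> R {p, z} + R {f, z, e} - R {z}"
    by (rule R_union_le) (use z_in e_in f_in p_in in auto)
  moreover have "R {f, p, e} \<le> R ({p, z} \<union> {f, z, e})" by (rule R_mono) (use z_in e_in f_in p_in in auto)
  ultimately show False using le assms(2,4) unfolding triangle_def by simp
qed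

lemma pair_R_p_z1_z2: "R {p, z1, z2} = 3"
proof (rule ccontr)
  assume "R {p, z1, z2} \<noteq> 3"
  moreover have "R {p, z1, z2} \<le> int (card {p, z1, z2})" by (rule R_le_card) (use pair_in_Y in auto)
  moreover have "card {p, z1, z2} \<le> 3" by (auto simp: card_insert_if)
  ultimately have le: "R {p, z1, z2} \<le> 2" by linarith
  have T_sep: "z1 \<notin> S" "z2 \<notin> S" "z1 \<noteq> f" "z1 \<noteq> p" "z2 \<noteq> f" "z2 \<noteq> p" using z_in_T by auto
  have "R {e1, z2, p} \<le> R (Y - {z1, f, e2})"
    by (rule R_mono) (use pair_in_Y z12 e12 f_ne_p T_sep S_pair S_in in auto)
  moreover have "R {e2, z1, p} \<le> R (Y - {z2, f, e1})"
    by (rule R_mono) (use pair_in_Y z12 e12 f_ne_p T_sep S_pair S_in in auto)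
  ultimately have l: "R {e1, z2, p} \<le> 2" "R {e2, z1, p} \<le> 2"
    using triads pair_R_Y unfolding triad_def by simp_all
  have pz: "R {p, z1} = 2" "R {p, z2} = 2"
    using pair_R_p_z[of z1 e1] pair_R_p_z[of z2 e2] triangles pair_R_f_p_e S_pair by auto
  have "R ({p, z1, z2} \<union> {e2, z1, p}) \<le> R {p, z1, z2} + R {e2, z1, p} - R {p, z1}"
    by (rule R_union_le) (use pair_in_Y in auto)
  moreover have "R (({p, z1, z2} \<union> {e2, z1, p}) \<union> {e1, z2, p})
      \<le> R ({p, z1, z2} \<union> {e2, z1, p}) + R {e1, z2, p} - R {p, z2}"
    by (rule R_union_le) (use pair_in_Y in auto)
  moreover have "R {p, e1, e2} \<le> R (({p, z1, z2} \<union> {e2, z1, p}) \<union> {e1, z2, p})"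
    by (rule R_mono) (use pair_in_Y in auto)
  ultimately show False using le l pz R_p_pair_S[of e1 e2] S_pair e12 by simp
qed

lemma false_if_S_pair: False
proof -
  have "R {z1, z2} \<le> 2" using R_le_card[of "{z1, z2}"] pair_in_Y z12 by simp
  moreover have "R {f, z1, z2} \<le> R {z1, z2} + 1" using R_insert_le[of "{z1, z2}" f] pair_in_Y by simp
  ultimately have R_z12: "R {z1, z2} = 2" using pair_R_f_z1_z2 by simp
  have "R {f, z1, z2} \<le> R {f, p, z1, z2}" by (rule R_mono) (use pair_in_Y in auto)
  moreover have "R {f, p, z1, z2} \<le> R Y" by (rule R_mono) (use pair_in_Y in auto)
  ultimately have "R {f, p, z1, z2} = 3" using pair_R_f_z1_z2 pair_R_Y by simp
  hence "parallel_over R f p {z1, z2}"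
    unfolding parallel_over_def using pair_R_f_z1_z2 pair_R_p_z1_z2 R_z12 by simp
  with z_in_T have "{z1, z2} = S" by (intro unique) auto
  thus False using z_in_T by blast
qed

end

lemma no_triads_and_triangles:
  assumes "S \<noteq> {}"
    and triads: "\<And>g. g \<in> T \<Longrightarrow> \<exists>x\<in>S. triad g x"
    and triangles: "\<And>e. e \<in> S \<Longrightarrow> \<exists>z\<in>T. triangle z e"
  shows False
proof -
  obtain e1 where e1: "e1 \<in> S" using assms(1) by blast
  obtain z1 where z1: "z1 \<in> T" "triangle z1 e1" using triangles[OF e1] by blast
  obtain x1 where x1: "x1 \<in> S" "triad z1 x1" using triads[OF z1(1)] by blast
  show False
  proof (cases "S = {e1}")
    case True
    hence "x1 = e1" using x1(1) by blast
    thus False using false_if_S_singleton[OF True z1] x1(2) by blast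
  next
    case False
    then obtain e2 where e2: "e2 \<in> S" "e2 \<noteq> e1" using e1 by blast
    obtain z2 where z2: "z2 \<in> T" "triangle z2 e2" using triangles[OF e2(1)] by blast
    obtain x2 where x2: "x2 \<in> S" "triad z2 x2" using triads[OF z2(1)] by blast
    have z12: "z1 \<noteq> z2" using triangles_distinct[OF e1 e2(1) e2(2)[symmetric] z1] z2(2) by blast
    have x12: "x1 = e2" "x2 = e1"
      using triad_triangle_orthogonal[OF z1(1) x1 e2(1) z2] triad_triangle_orthogonal[OF z2(1) x2 e1 z1] z12
      by auto
    have "S = {e1, e2}"
    proof (rule ccontr)
      assume "S \<noteq> {e1, e2}"
      then obtain e3 where e3: "e3 \<in> S" "e3 \<noteq> e1" "e3 \<noteq> e2" using e1 e2 by blast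
      obtain z3 where z3: "z3 \<in> T" "triangle z3 e3" using triangles[OF e3(1)] by blast
      have "z3 = z1" "z3 = z2"
        using triad_triangle_orthogonal[OF z1(1) x1 e3(1) z3] triad_triangle_orthogonal[OF z2(1) x2 e3(1) z3]
          x12 e3 by auto
      thus False using z12 by simp
    qed
    thus False using false_if_S_pair[of e1 e2 z1 z2] e2(2) z1 z2 z12 x1(2) x2(2) x12 by blast
  qed
qed

end

theorem partner_of_unique_parallel_set:
  assumes "unique_parallel_set Y R f p S" "Y - {f, p} \<noteq> {}"
  shows "\<exists>x\<in>Y - {f, p}. rank_parallel R f x \<or> rank_series Y R f x"
  using assms
proof (induction "card Y" arbitrary: Y R S rule: less_induct)
  case less
  interpret unique_parallel_set Y R f p S by (rule less.prems(1))
  consider "S = {}" | "S \<noteq> {}" "T = {}" | "S \<noteq> {}" "T \<noteq> {}" by blast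
  thus ?case
  proof cases
    case 1
    thus ?thesis using partner_if_S_empty less.prems(2) by blast
  next
    case 2
    thus ?thesis using partner_if_T_empty by blast
  next
    case 3
    show ?thesis
    proof (rule ccontr)
      assume "\<not> ?thesis"
      hence no_partner: "\<And>x. x \<in> Y - {f, p} \<Longrightarrow> \<not> rank_parallel R f x \<and> \<not> rank_series Y R f x"
        by blast
      have "\<exists>x\<in>S. triad g x" if g: "g \<in> T" for g
      proof -
        have "card (Y - {g}) < card Y" using g finite_ground by (intro card_Diff1_less) auto
        moreover have "S \<subseteq> Y - {g} - {f, p}" using S_sub g by blast
        hence "Y - {g} - {f, p} \<noteq> {}" using \<open>S \<noteq> {}\<close> by blast
        ultimately have "\<exists>x\<in>Y - {g} - {f, p}. rank_parallel R f x \<or> rank_series (Y - {g}) R f x"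
          by (rule less.hyps[OF _ unique_parallel_set_delete[OF g]])
        thus ?thesis using triad_of_deletion_partner[OF no_partner g] by blast
      qed
      moreover have "\<exists>z\<in>T. triangle z e" if e: "e \<in> S" for e
      proof -
        have "card (Y - {e}) < card Y" using e S_in finite_ground by (intro card_Diff1_less) auto
        moreover have "T \<subseteq> Y - {e} - {f, p}" using e by blast
        hence "Y - {e} - {f, p} \<noteq> {}" using \<open>T \<noteq> {}\<close> by blast
        ultimately have "\<exists>z\<in>Y - {e} - {f, p}. rank_parallel (\<lambda>Z. R (insert e Z) - R {e}) f z
            \<or> rank_series (Y - {e}) (\<lambda>Z. R (insert e Z) - R {e}) f z"
          by (rule less.hyps[OF _ unique_parallel_set_contract[OF e]])
        thus ?thesis using triangle_of_contraction_partner[OF no_partner e] by blast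
      qed
      ultimately show False using no_triads_and_triangles[OF \<open>S \<noteq> {}\<close>] by blast
    qed
  qed
qed

section \<open>Collapsing one side of a 2-separation\<close>

lemma these_Un [simp]: "Option.these (Z \<union> W) = Option.these Z \<union> Option.these W"
  and these_Int [simp]: "Option.these (Z \<inter> W) = Option.these Z \<inter> Option.these W"
  and these_Diff [simp]: "Option.these (Z - W) = Option.these Z - Option.these W"
  by (auto simp: in_these_eq)

lemma rank_union_le: "matroid M \<Longrightarrow> rank M (X \<union> Y) \<le> rank M X + rank M Y"
  using rank_submodular[of M X Y] by simp

locale separation_of_order_2 =
  fixes M :: "'a matroid" and A B :: "'a set"
  assumes matroid: "matroid M"
    and disjoint: "A \<inter> B = {}" and partition: "A \<union> B = ground M"
    and conn_le_1: "rank M A + rank M B \<le> rank M (ground M) + 1"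
begin

lemma rank_separation_le:
  assumes "W \<subseteq> B"
  shows "rank M W + rank M (ground M) \<le> rank M B + rank M (A \<union> W)"
proof -
  have "B \<union> (A \<union> W) = ground M" "B \<inter> (A \<union> W) = W" using assms disjoint partition by blast+
  thus ?thesis using rank_submodular[OF matroid, of B "A \<union> W"] by simp
qed

text \<open>The rank function of the side \<open>B\<close> of the 2-sum decomposition along \<open>(A, B)\<close>:
  \<open>None\<close> is the basepoint, which carries the part of \<open>A\<close> that is seen from \<open>B\<close>.\<close>
definition collapse_rank :: "'a option set \<Rightarrow> int" where
  "collapse_rank Z =
     (if None \<in> Z then int (rank M (A \<union> Option.these Z)) - int (rank M A) + 1
      else int (rank M (Option.these Z)))"

lemma collapse_rank_insert:
  assumes "Z \<subseteq> insert None (Some ` B)" "x \<in> insert None (Some ` B)"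
  shows "collapse_rank Z \<le> collapse_rank (insert x Z) \<and> collapse_rank (insert x Z) \<le> collapse_rank Z + 1"
proof -
  have W: "Option.these Z \<subseteq> B" using assms(1) by (auto simp: in_these_eq)
  have rank_ins: "rank M X \<le> rank M (insert y X) \<and> rank M (insert y X) \<le> rank M X + 1" for X y
    using rank_mono[OF matroid, of X "insert y X"] rank_insert_le[OF matroid] by auto
  show ?thesis
  proof (cases x)
    case None
    show ?thesis
    proof (cases "None \<in> Z")
      case False
      have "rank M (Option.these Z) + rank M (ground M) \<le> rank M B + rank M (A \<union> Option.these Z)"
        using rank_separation_le[OF W] .
      moreover have "rank M (A \<union> Option.these Z) \<le> rank M A + rank M (Option.these Z)"
        using rank_union_le[OF matroid] .
      ultimately show ?thesis using None False conn_le_1 by (simp add: collapse_rank_def)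
    qed (simp add: None insert_absorb)
  next
    case (Some y)
    thus ?thesis using rank_ins[of "A \<union> Option.these Z" y] rank_ins[of "Option.these Z" y]
      by (simp add: collapse_rank_def)
  qed
qed

lemma collapse_rank_submodular:
  assumes "Z \<subseteq> insert None (Some ` B)" "W \<subseteq> insert None (Some ` B)"
  shows "collapse_rank (Z \<union> W) + collapse_rank (Z \<inter> W) \<le> collapse_rank Z + collapse_rank W"
proof -
  let ?z = "Option.these Z" and ?w = "Option.these W"
  have zw: "?z \<subseteq> B" "?w \<subseteq> B" using assms by (auto simp: in_these_eq)
  have sub: "rank M (X \<union> X') + rank M (X \<inter> X') \<le> rank M X + rank M X'" for X X'
    by (rule rank_submodular[OF matroid])
  have "(A \<union> ?z) \<union> (A \<union> ?w) = A \<union> (?z \<union> ?w)" "(A \<union> ?z) \<inter> (A \<union> ?w) = A \<union> (?z \<inter> ?w)"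
    "(A \<union> ?z) \<union> ?w = A \<union> (?z \<union> ?w)" "(A \<union> ?z) \<inter> ?w = ?z \<inter> ?w"
    "?z \<union> (A \<union> ?w) = A \<union> (?z \<union> ?w)" "?z \<inter> (A \<union> ?w) = ?z \<inter> ?w"
    using zw disjoint by blast+
  thus ?thesis
    using sub[of "A \<union> ?z" "A \<union> ?w"] sub[of "A \<union> ?z" ?w] sub[of ?z "A \<union> ?w"] sub[of ?z ?w]
    by (cases "None \<in> Z"; cases "None \<in> W") (simp_all add: collapse_rank_def)
qed

lemma rank_function_collapse: "rank_function (insert None (Some ` B)) collapse_rank"
proof
  show "finite (insert None (Some ` B))"
    using partition matroid_finite_ground[OF matroid] by (metis finite_Un finite_imageI finite_insert)
  show "collapse_rank {} = 0" by (simp add: collapse_rank_def rank_empty[OF matroid])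
qed (use collapse_rank_insert collapse_rank_submodular in blast)+

lemma parallel_over_collapse_iff:
  assumes "f \<notin> S"
  shows "parallel_over collapse_rank (Some f) None (Some ` S) \<longleftrightarrow>
    rank M (insert f S) = rank M S + 1 \<and> rank M (A \<union> S) = rank M A + rank M S
      \<and> rank M (insert f (A \<union> S)) = rank M A + rank M S"
  unfolding parallel_over_def collapse_rank_def by auto

end

context separation_of_order_2
begin

lemma rank_union_parallel_set:
  assumes f: "f \<in> B" and S: "S \<subseteq> B - {f}"
    and par: "parallel_over collapse_rank (Some f) None (Some ` S)" and X: "X \<subseteq> A"
  shows "rank M (X \<union> S) = rank M X + rank M S"
    and "rank M (insert f (X \<union> S)) + rank M B = rank M S + 1 + rank M (X \<union> B)"
proof -
  have P1: "rank M (insert f S) = rank M S + 1" and P2: "rank M (A \<union> S) = rank M A + rank M S"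
    and P3: "rank M (insert f (A \<union> S)) = rank M A + rank M S"
    using par parallel_over_collapse_iff[of f S] S by auto
  have XS: "(X \<union> S) \<union> A = A \<union> S" "(X \<union> S) \<inter> A = X" "X \<inter> S = {}" using X S disjoint by blast+
  show "rank M (X \<union> S) = rank M X + rank M S"
    using rank_submodular[OF matroid, of "X \<union> S" A] rank_submodular[OF matroid, of X S]
      XS P2 rank_empty[OF matroid] by simp
  let ?Z = "insert f S"
  have ZB: "?Z \<subseteq> B" using f S by blast
  have AZ: "A \<union> ?Z = insert f (A \<union> S)" by blast
  have lam: "rank M A + rank M B = rank M (ground M) + 1"
    using rank_separation_le[OF ZB] AZ P1 P3 conn_le_1 by simp
  have "(X \<union> ?Z) \<union> B = X \<union> B" "(X \<union> ?Z) \<inter> B = ?Z" using ZB X disjoint by blast+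
  hence lo: "rank M (X \<union> B) + rank M ?Z \<le> rank M (X \<union> ?Z) + rank M B"
    using rank_submodular[OF matroid, of "X \<union> ?Z" B] by simp
  have "(X \<union> B) \<union> (A \<union> ?Z) = ground M" "(X \<union> B) \<inter> (A \<union> ?Z) = X \<union> ?Z"
    using X ZB disjoint partition by blast+
  hence up: "rank M (ground M) + rank M (X \<union> ?Z) \<le> rank M (X \<union> B) + rank M (A \<union> ?Z)"
    using rank_submodular[OF matroid, of "X \<union> B" "A \<union> ?Z"] by simp
  have "insert f (X \<union> S) = X \<union> ?Z" by blast
  thus "rank M (insert f (X \<union> S)) + rank M B = rank M S + 1 + rank M (X \<union> B)"
    using lo up AZ P1 P3 lam by simp
qed

text \<open>Independence in \<open>M / (C\<^sub>A \<union> S)\<close> of a set meeting \<open>B\<close> at most in \<open>f\<close> does not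
  depend on the parallel set \<open>S\<close>.\<close>
lemma indep_contraction_parallel_set_iff:
  assumes f: "f \<in> B" and S: "S \<subseteq> B - {f}"
    and par: "parallel_over collapse_rank (Some f) None (Some ` S)"
    and CA: "CA \<subseteq> A" and I: "I - {f} \<subseteq> A"
  shows "rank M (I \<union> (CA \<union> S)) = card I + rank M (CA \<union> S) \<longleftrightarrow>
    (if f \<in> I then 1 + rank M ((I - {f}) \<union> CA \<union> B) = card I + rank M CA + rank M B
     else rank M ((I - {f}) \<union> CA) = card I + rank M CA)"
proof -
  let ?X = "(I - {f}) \<union> CA"
  have X: "?X \<subseteq> A" using CA I by blast
  note ranks = rank_union_parallel_set[OF f S par]
  have c: "rank M (CA \<union> S) = rank M CA + rank M S" using ranks(1)[OF CA] .
  show ?thesis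
  proof (cases "f \<in> I")
    case True
    have "I \<union> (CA \<union> S) = insert f (?X \<union> S)" "?X \<union> B = (I - {f}) \<union> CA \<union> B" using True by blast+
    thus ?thesis using ranks(2)[OF X] c True by auto
  next
    case False
    have "I \<union> (CA \<union> S) = ?X \<union> S" using False by blast
    thus ?thesis using ranks(1)[OF X] c False by auto
  qed
qed

lemma minor_parallel_set_invariant:
  assumes f: "f \<in> B" and S: "S1 \<subseteq> B - {f}" "S2 \<subseteq> B - {f}"
    and par: "parallel_over collapse_rank (Some f) None (Some ` S1)"
      "parallel_over collapse_rank (Some f) None (Some ` S2)"
    and CA: "CA \<subseteq> A" and DA: "DA \<subseteq> A"
  shows "deletion (contraction M (CA \<union> S1)) (DA \<union> (B - {f} - S1))
       = deletion (contraction M (CA \<union> S2)) (DA \<union> (B - {f} - S2))"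
proof (rule matroid_eqI)
  show "ground (deletion (contraction M (CA \<union> S1)) (DA \<union> (B - {f} - S1)))
      = ground (deletion (contraction M (CA \<union> S2)) (DA \<union> (B - {f} - S2)))"
    using S by auto
  have same_ground: "I \<subseteq> ground M - (CA \<union> S1) - (DA \<union> (B - {f} - S1))
      \<longleftrightarrow> I \<subseteq> ground M - (CA \<union> S2) - (DA \<union> (B - {f} - S2))" for I
    using S by blast
  have "indep (deletion (contraction M (CA \<union> S1)) (DA \<union> (B - {f} - S1))) I
      \<longleftrightarrow> indep (deletion (contraction M (CA \<union> S2)) (DA \<union> (B - {f} - S2))) I" for I
  proof (cases "I \<subseteq> ground M - (CA \<union> S1) - (DA \<union> (B - {f} - S1))")
    case True
    hence "I - {f} \<subseteq> A" using disjoint partition by blast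
    thus ?thesis
      using True same_ground[of I] indep_contraction_parallel_set_iff[OF f S(1) par(1) CA]
        indep_contraction_parallel_set_iff[OF f S(2) par(2) CA] by auto
  qed (use same_ground in auto)
  thus "indep (deletion (contraction M (CA \<union> S1)) (DA \<union> (B - {f} - S1)))
      = indep (deletion (contraction M (CA \<union> S2)) (DA \<union> (B - {f} - S2)))" by blast
qed

end

context separation_of_order_2
begin

lemma parallel_over_contraction_part:
  assumes minor: "N = deletion (contraction M C) D" "C \<subseteq> ground M"
    and f: "f \<in> B" "f \<in> ground N" "\<not> loop N f" "\<not> coloop N f"
    and N_in_A: "ground N - {f} \<subseteq> A"
  shows "parallel_over collapse_rank (Some f) None (Some ` (C \<inter> B))"
proof -
  let ?CX = "C \<inter> B"
  have fC: "f \<notin> C" using f(2) minor(1) by auto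
  have rho: "rank M (insert f ?CX) = rank M ?CX + 1"
  proof (rule ccontr)
    assume "rank M (insert f ?CX) \<noteq> rank M ?CX + 1"
    hence "rank M (insert f ?CX) = rank M ?CX"
      using rank_insert_le[OF matroid, of f ?CX] rank_mono[OF matroid subset_insertI, of ?CX f] by simp
    hence "rank M (insert f C) = rank M C" by (rule rank_insert_eq_mono[OF matroid, rotated]) blast
    thus False using rank_insert_of_nonloop_minor[OF minor(1) f(2,3)] by simp
  qed
  have "(ground N - {f}) \<union> C \<subseteq> A \<union> ?CX" using N_in_A minor(2) partition by blast
  hence f_cl: "rank M (insert f (A \<union> ?CX)) = rank M (A \<union> ?CX)"
    using rank_insert_eq_mono[OF matroid] rank_insert_of_noncoloop_minor[OF matroid minor(1) f(2,4)] by blast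
  have "rank M (insert f ?CX) + rank M (ground M) \<le> rank M B + rank M (insert f (A \<union> ?CX))"
    using rank_separation_le[of "insert f ?CX"] f(1) by simp
  hence "rank M (A \<union> ?CX) = rank M A + rank M ?CX"
    using f_cl rho rank_union_le[OF matroid, of A ?CX] conn_le_1 by linarith
  thus ?thesis using parallel_over_collapse_iff[of f ?CX] fC rho f_cl by simp
qed

lemma minor_by_parallel_set:
  assumes minor: "N = deletion (contraction M C) D" "C \<subseteq> ground M" "D \<subseteq> ground M" "C \<inter> D = {}"
    and f: "f \<in> B" "B \<inter> ground N = {f}" "\<not> loop N f" "\<not> coloop N f"
    and S: "S \<subseteq> B - {f}" "parallel_over collapse_rank (Some f) None (Some ` S)"
  shows "N = deletion (contraction M (C \<inter> A \<union> S)) (D \<inter> A \<union> (B - {f} - S))"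
proof -
  have GN: "ground N = ground M - C - D" using minor(1) by simp
  have "B - {f} \<subseteq> C \<union> D" "f \<notin> C \<union> D" using f(2) GN partition by blast+
  hence "C = C \<inter> A \<union> C \<inter> B" "D = D \<inter> A \<union> (B - {f} - C \<inter> B)"
    using minor(2-4) partition by blast+
  hence "N = deletion (contraction M (C \<inter> A \<union> C \<inter> B)) (D \<inter> A \<union> (B - {f} - C \<inter> B))"
    using minor(1) by simp
  also have "\<dots> = deletion (contraction M (C \<inter> A \<union> S)) (D \<inter> A \<union> (B - {f} - S))"
  proof (rule minor_parallel_set_invariant[OF f(1) _ S(1) _ S(2)])
    show "C \<inter> B \<subseteq> B - {f}" using \<open>f \<notin> C \<union> D\<close> by blast
    have "ground N - {f} \<subseteq> A" using f(2) GN partition by blast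
    thus "parallel_over collapse_rank (Some f) None (Some ` (C \<inter> B))"
      using parallel_over_contraction_part[OF minor(1,2) f(1) _ f(3,4)] f(2) by blast
  qed auto
  finally show ?thesis .
qed

lemma partner_in_collapse:
  assumes f: "f \<in> B" and y: "y \<in> B - {f}"
    and partner: "rank_parallel collapse_rank (Some f) (Some y)
      \<or> rank_series (insert None (Some ` B)) collapse_rank (Some f) (Some y)"
  shows "in_parallel M f y \<or> in_series M f y"
proof -
  let ?E = "ground M" and ?Y = "insert None (Some ` B)"
  have in_E: "f \<in> ?E" "y \<in> ?E" "f \<noteq> y" using f y partition by auto
  show ?thesis
  proof (cases "rank_parallel collapse_rank (Some f) (Some y)")
    case True
    hence "rank M {f} = 1" "rank M {y} = 1" "rank M {f, y} = 1"
      unfolding rank_parallel_def collapse_rank_def by simp_all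
    thus ?thesis using in_parallel_of_rank[OF matroid in_E] by simp
  next
    case False
    hence series: "rank_series ?Y collapse_rank (Some f) (Some y)" using partner by blast
    have "A \<union> Option.these (?Y - {Some f, Some y}) = ?E - {f, y}" "A \<union> Option.these ?Y = ?E"
      "A \<union> Option.these (?Y - {Some f}) = ?E - {f}" "A \<union> Option.these (?Y - {Some y}) = ?E - {y}"
      using disjoint partition f y by (auto simp: in_these_eq)
    hence "rank M (?E - {f, y}) < rank M ?E" "rank M (?E - {f}) = rank M ?E"
      "rank M (?E - {y}) = rank M ?E"
      using series unfolding rank_series_def collapse_rank_def by simp_all
    thus ?thesis using in_series_of_rank[OF matroid in_E] by simp
  qed
qed

lemma second_parallel_set:
  assumes f: "f \<in> B" and "B - {f} \<noteq> {}"
    and no_partner: "\<And>y. y \<in> B - {f} \<Longrightarrow> \<not> in_parallel M f y \<and> \<not> in_series M f y"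
    and S: "S \<subseteq> B - {f}" "parallel_over collapse_rank (Some f) None (Some ` S)"
  obtains S' where "S' \<subseteq> B - {f}" "parallel_over collapse_rank (Some f) None (Some ` S')" "S' \<noteq> S"
proof -
  let ?Y = "insert None (Some ` B)"
  have Y_rest: "?Y - {Some f, None} = Some ` (B - {f})" by auto
  have "\<not> unique_parallel_set ?Y collapse_rank (Some f) None (Some ` S)"
  proof
    assume "unique_parallel_set ?Y collapse_rank (Some f) None (Some ` S)"
    from partner_of_unique_parallel_set[OF this] Y_rest \<open>B - {f} \<noteq> {}\<close>
    obtain y where "y \<in> B - {f}" "rank_parallel collapse_rank (Some f) (Some y)
        \<or> rank_series ?Y collapse_rank (Some f) (Some y)" by auto
    thus False using partner_in_collapse[OF f] no_partner by blast
  qed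
  then obtain S'' where S'': "S'' \<subseteq> Some ` (B - {f})" "parallel_over collapse_rank (Some f) None S''"
    "S'' \<noteq> Some ` S"
    unfolding unique_parallel_set_def unique_parallel_set_axioms_def Y_rest
    using rank_function_collapse f S by auto
  have S''_eq: "S'' = Some ` Option.these S''" using S''(1) by (auto simp: in_these_eq)
  show thesis
  proof (rule that)
    show "Option.these S'' \<subseteq> B - {f}" using S''(1) by (auto simp: in_these_eq)
    show "parallel_over collapse_rank (Some f) None (Some ` Option.these S'')" using S''(2) S''_eq by simp
    show "Option.these S'' \<noteq> S" using S''(3) S''_eq by metis
  qed
qed

lemma deletable_and_contractible:
  assumes minor: "N = deletion (contraction M C) D" "C \<subseteq> ground M" "D \<subseteq> ground M" "C \<inter> D = {}"
    and f: "f \<in> B" "B \<inter> ground N = {f}" "\<not> loop N f" "\<not> coloop N f"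
    and S1: "S1 \<subseteq> B - {f}" "parallel_over collapse_rank (Some f) None (Some ` S1)"
    and S2: "S2 \<subseteq> B - {f}" "parallel_over collapse_rank (Some f) None (Some ` S2)"
    and e: "e \<in> S1" "e \<notin> S2"
  shows "is_minor N (deletion M {e}) \<and> is_minor N (contraction M {e})"
proof (rule minor_of_deletion_and_contraction[OF matroid _ _ _ minor_by_parallel_set[OF minor f S1]
      _ _ _ minor_by_parallel_set[OF minor f S2]])
  show "C \<inter> A \<union> S1 \<subseteq> ground M" "D \<inter> A \<union> (B - {f} - S1) \<subseteq> ground M"
    "C \<inter> A \<union> S2 \<subseteq> ground M" "D \<inter> A \<union> (B - {f} - S2) \<subseteq> ground M"
    using minor S1 S2 partition by auto
  show "(C \<inter> A \<union> S1) \<inter> (D \<inter> A \<union> (B - {f} - S1)) = {}" "(C \<inter> A \<union> S2) \<inter> (D \<inter> A \<union> (B - {f} - S2)) = {}"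
    using minor(4) S1 S2 disjoint by auto
  show "e \<in> C \<inter> A \<union> S1" "e \<in> D \<inter> A \<union> (B - {f} - S2)" using e S1 by auto
qed

lemma exists_deletable_and_contractible:
  assumes minor: "N = deletion (contraction M C) D" "C \<subseteq> ground M" "D \<subseteq> ground M" "C \<inter> D = {}"
    and f: "f \<in> B" "B \<inter> ground N = {f}" "\<not> loop N f" "\<not> coloop N f"
    and "B - {f} \<noteq> {}"
    and no_partner: "\<And>y. y \<in> B - {f} \<Longrightarrow> \<not> in_parallel M f y \<and> \<not> in_series M f y"
  shows "\<exists>e \<in> B - {f}. is_minor N (deletion M {e}) \<and> is_minor N (contraction M {e})"
proof -
  have CB: "C \<inter> B \<subseteq> B - {f}" using f(2) minor(1) by auto
  have "ground N - {f} \<subseteq> A" using f(2) minor(1) partition by auto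
  hence par: "parallel_over collapse_rank (Some f) None (Some ` (C \<inter> B))"
    using parallel_over_contraction_part[OF minor(1,2) f(1) _ f(3,4)] f(2) by blast
  obtain S' where S': "S' \<subseteq> B - {f}" "parallel_over collapse_rank (Some f) None (Some ` S')"
    "S' \<noteq> C \<inter> B"
    using second_parallel_set[OF f(1) \<open>B - {f} \<noteq> {}\<close> no_partner CB par] by blast
  then obtain e where "e \<in> C \<inter> B \<and> e \<notin> S' \<or> e \<in> S' \<and> e \<notin> C \<inter> B" by blast
  thus ?thesis
    using deletable_and_contractible[OF minor f CB par S'(1,2)]
      deletable_and_contractible[OF minor f S'(1,2) CB par] CB S'(1) by blast
qed

end

theorem lemma2p17:
  fixes M N :: "'a matroid" and A B :: "'a set" and f :: 'a
  assumes "matroid M"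
    and "connected M"
    and "is_minor N M"
    and "\<forall>e \<in> ground N. \<not> loop N e \<and> \<not> coloop N e"
    and "two_separation M A B"
    and "B \<inter> ground N = {f}"
    and "\<forall>g \<in> ground M. \<not> in_series M f g \<and> \<not> in_parallel M f g"
  shows "\<exists>e \<in> B - {f}. is_minor N (deletion M {e}) \<and> is_minor N (contraction M {e})"
proof -
  obtain C D where minor: "N = deletion (contraction M C) D" "C \<subseteq> ground M" "D \<subseteq> ground M" "C \<inter> D = {}"
    using assms(3) unfolding is_minor_def by blast
  have AB: "A \<inter> B = {}" "A \<union> B = ground M" "card B \<ge> 2" "conn_fn M A < 2"
    using assms(5) unfolding two_separation_def by auto
  hence "ground M - A = B" by blast
  with assms(1) AB interpret separation_of_order_2 M A B
    by unfold_locales (auto simp: conn_fn_def)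
  have f: "f \<in> B" "B \<inter> ground N = {f}" "\<not> loop N f" "\<not> coloop N f" using assms(4,6) by auto
  have "B - {f} \<noteq> {}"
  proof
    assume "B - {f} = {}"
    hence "card B \<le> card {f}" by (intro card_mono) auto
    thus False using AB(3) by simp
  qed
  moreover have "\<not> in_parallel M f y \<and> \<not> in_series M f y" if "y \<in> B - {f}" for y
    using assms(7) that partition by blast
  ultimately show ?thesis using exists_deletable_and_contractible[OF minor f] by blast
qed

end
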